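(* Let $(N,M,W,C,P,\overline{Q})$ be an MRS-situation and $(N,M,v)$ the corresponding MRS-game. Then $(N,M,v)$ is balanced, i.e. its core is nonempty.
   Context: An MRS-situation $(N,M,W,C,P,\overline{Q})$ consists of a finite set $N$ of retailers and a finite set $M$ of suppliers (distinct agents), and: for each $j\in M$ a unit production cost $c_j:[0,\infty)\to(0,\infty)$, decreasing and continuous with $c_j(q)q$ nondecreasing, and a wholesale price $w_j:[0,\infty)\to(0,\infty)$, nonincreasing and continuous, with $w_j(q)>c_j(q)$ for all $q\ge0$ and $w_j(q)q$ nondecreasing; for each $i\in N$ a selling price $p_i:[0,\infty)\to\mathbb{R}$, nonincreasing and continuous, with $p_i(0)>w_j(0)$ for all $j$, and $q_i^*>0$ with $p_i(q_i^* )=0$; and capacities $\overline{q}_{ij}\in(0,\infty)$. For an order matrix $q=(q_{ij})_{i\in R,j\in M}\ge0$: $q_{Rj}=\sum_{i\in R}q_{ij}$, $q_{iM}=\sum_{j}q_{ij}$, $q_{RS}=\sum_{j\in S}\sum_{i\in R}q_{ij}$, $q_i=(q_{ij})_j$, $q_R=(q_{Rj})_j$; $c_S(x)=\min_{j\in S}c_j(x)$. For $i\in R$: $\Pi_i(q_i,\Psi^S(q_R))=p_i(q_{iM})q_{iM}-\sum_{j\in S}c_S(q_{RS})q_{ij}-\sum_{j\in M\setminus S}w_j(q_{Rj})q_{ij}$. $\mathbb{Q}^R=\{q\in\mathbb{R}_+^{R\times M}: q_{iM}\le q_i^*,\ q_{ij}\le\overline{q}_{ij}\}$; $q^{(R,S)}$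 is an optimal solution of $\max\{\sum_{i\in R}\Pi_i(q_i,\Psi^S(q_R)):q\in\mathbb{Q}^R\}$. The MRS-game is the TU-game on player set $N\cup M$ with $v(R,S)=\sum_{i\in R}\Pi_i(q_i^{(R,S)},\Psi^S(q_R^{(R,S)}))$ for $\emptyset\ne R\subseteq N$, $S\subseteq M$ (value of coalition $R\cup S$), and $v(\emptyset,S)=0$. Its core is $\{x\in\mathbb{R}^{N\cup M}: \sum_{k\in N\cup M}x_k=v(N,M),\ \sum_{k\in R\cup S}x_k\ge v(R,S)\ \forall R\subseteq N, S\subseteq M\}$. *)

theory Defs
  imports "HOL-Analysis.Analysis"
begin

text \<open>Retailers have type 'n, suppliers type 'm; players of the
  game are of type 'n + 'm (so retailers and suppliers are distinct agents).
  An order matrix is a function q :: 'n => 'm => real (only entries in R x M matter).\<close>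

definition mrs_situation ::
  "'n set \<Rightarrow> 'm set \<Rightarrow> ('m \<Rightarrow> real \<Rightarrow> real) \<Rightarrow> ('m \<Rightarrow> real \<Rightarrow> real)
   \<Rightarrow> ('n \<Rightarrow> real \<Rightarrow> real) \<Rightarrow> ('n \<Rightarrow> real) \<Rightarrow> ('n \<Rightarrow> 'm \<Rightarrow> real) \<Rightarrow> bool" where
  "mrs_situation N M w c p qstar qbar \<longleftrightarrow>
     finite N \<and> finite M \<and>
     (\<forall>j\<in>M.
        (\<forall>x\<ge>0. c j x > 0) \<and>
        (\<forall>x y. 0 \<le> x \<and> x < y \<longrightarrow> c j y < c j x) \<and>
        continuous_on {0..} (c j) \<and>
        (\<forall>x y. 0 \<le> x \<and> x \<le> y \<longrightarrow> c j x * x \<le> c j y * y) \<and>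
        (\<forall>x\<ge>0. w j x > 0) \<and>
        (\<forall>x y. 0 \<le> x \<and> x \<le> y \<longrightarrow> w j y \<le> w j x) \<and>
        continuous_on {0..} (w j) \<and>
        (\<forall>x\<ge>0. w j x > c j x) \<and>
        (\<forall>x y. 0 \<le> x \<and> x \<le> y \<longrightarrow> w j x * x \<le> w j y * y)) \<and>
     (\<forall>i\<in>N.
        (\<forall>x y. 0 \<le> x \<and> x \<le> y \<longrightarrow> p i y \<le> p i x) \<and>
        continuous_on {0..} (p i) \<and>
        (\<forall>j\<in>M. p i 0 > w j 0) \<and>
        qstar i > 0 \<and> p i (qstar i) = 0 \<and>
        (\<forall>j\<in>M. qbar i j > 0))"

definition cmin :: "('m \<Rightarrow> real \<Rightarrow> real) \<Rightarrow> 'm set \<Rightarrow> real \<Rightarrow> real" where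
  "cmin c S x = Min ((\<lambda>j. c j x) ` S)"

definition mrs_profit ::
  "'m set \<Rightarrow> ('m \<Rightarrow> real \<Rightarrow> real) \<Rightarrow> ('m \<Rightarrow> real \<Rightarrow> real) \<Rightarrow> ('n \<Rightarrow> real \<Rightarrow> real)
   \<Rightarrow> 'n set \<Rightarrow> 'm set \<Rightarrow> ('n \<Rightarrow> 'm \<Rightarrow> real) \<Rightarrow> 'n \<Rightarrow> real" where
  "mrs_profit M w c p R S q i =
     p i (\<Sum>j\<in>M. q i j) * (\<Sum>j\<in>M. q i j)
     - (\<Sum>j\<in>S. cmin c S (\<Sum>j'\<in>S. \<Sum>i'\<in>R. q i' j') * q i j)
     - (\<Sum>j\<in>M - S. w j (\<Sum>i'\<in>R. q i' j) * q i j)"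

definition mrs_feasible ::
  "'m set \<Rightarrow> ('n \<Rightarrow> real) \<Rightarrow> ('n \<Rightarrow> 'm \<Rightarrow> real) \<Rightarrow> 'n set \<Rightarrow> ('n \<Rightarrow> 'm \<Rightarrow> real) \<Rightarrow> bool" where
  "mrs_feasible M qstar qbar R q \<longleftrightarrow>
     (\<forall>i\<in>R. \<forall>j\<in>M. 0 \<le> q i j \<and> q i j \<le> qbar i j) \<and>
     (\<forall>i\<in>R. (\<Sum>j\<in>M. q i j) \<le> qstar i)"

text \<open>v(R,S): the optimal value of the joint profit maximisation problem
  (an optimal solution exists, so the supremum is the maximum); v(\<emptyset>,S) = 0.\<close>
definition mrs_value ::
  "'m set \<Rightarrow> ('m \<Rightarrow> real \<Rightarrow> real) \<Rightarrow> ('m \<Rightarrow> real \<Rightarrow> real) \<Rightarrow> ('n \<Rightarrow> real \<Rightarrow> real)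
   \<Rightarrow> ('n \<Rightarrow> real) \<Rightarrow> ('n \<Rightarrow> 'm \<Rightarrow> real) \<Rightarrow> 'n set \<Rightarrow> 'm set \<Rightarrow> real" where
  "mrs_value M w c p qstar qbar R S =
     (if R = {} then 0
      else Sup ((\<lambda>q. \<Sum>i\<in>R. mrs_profit M w c p R S q i) ` {q. mrs_feasible M qstar qbar R q}))"

definition mrs_core ::
  "'n set \<Rightarrow> 'm set \<Rightarrow> ('n set \<Rightarrow> 'm set \<Rightarrow> real) \<Rightarrow> ('n + 'm \<Rightarrow> real) set" where
  "mrs_core N M v = {x.
     (\<Sum>k\<in>Inl ` N \<union> Inr ` M. x k) = v N M \<and>
     (\<forall>R S. R \<subseteq> N \<and> S \<subseteq> M \<longrightarrow> (\<Sum>k\<in>Inl ` R \<union> Inr ` S. x k) \<ge> v R S)}"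

end

theory Submission
  imports Defs
begin

(* Let h_i(pi) be the best surplus retailer i can obtain on its own when every unit costs pi.
   The sum of the h_i is continuous in pi, at least v(N,M) at pi = 0 and zero for large pi,
   so at some price pi it equals v(N,M); paying each retailer h_i(pi) and each supplier
   nothing then lies in the core. Indeed, every unit a coalition (R,S) orders costs it at
   least c_M(Q), Q its total order. If its plan earned more than the sum of h_i(pi) over R,
   then c_M(Q) < pi; adding near-optimal orders of the retailers outside R can only lower
   c_M, so the grand coalition would earn more than the sum of h_i(pi) over N, i.e. v(N,M). *)

lemma lipschitz_on_SUP:
  fixes f :: "'a::metric_space \<Rightarrow> 'i \<Rightarrow> real"
  assumes "I \<noteq> {}"
    and lip: "\<And>i. i \<in> I \<Longrightarrow> L-lipschitz_on X (\<lambda>x. f x i)"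
    and bdd: "\<And>x. x \<in> X \<Longrightarrow> bdd_above (f x ` I)"
  shows "L-lipschitz_on X (\<lambda>x. SUP i\<in>I. f x i)"
proof (rule lipschitz_onI)
  have one_sided: "(SUP i\<in>I. f x i) \<le> (SUP i\<in>I. f y i) + L * dist x y"
    if "x \<in> X" "y \<in> X" for x y
  proof (rule cSUP_least[OF \<open>I \<noteq> {}\<close>])
    fix i assume "i \<in> I"
    have "f x i \<le> f y i + L * dist x y"
      using lipschitz_onD[OF lip[OF \<open>i \<in> I\<close>] that] by (simp add: dist_real_def abs_le_iff)
    also have "f y i \<le> (SUP i\<in>I. f y i)"
      by (rule cSUP_upper[OF \<open>i \<in> I\<close> bdd[OF \<open>y \<in> X\<close>]])
    finally show "f x i \<le> (SUP i\<in>I. f y i) + L * dist x y" by simp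
  qed
  fix x y assume "x \<in> X" "y \<in> X"
  then show "dist (SUP i\<in>I. f x i) (SUP i\<in>I. f y i) \<le> L * dist x y"
    using one_sided[of x y] one_sided[of y x] by (simp add: dist_real_def dist_commute abs_le_iff)
next
  obtain i where "i \<in> I" using \<open>I \<noteq> {}\<close> by blast
  then show "0 \<le> L" using lipschitz_on_nonneg[OF lip] by blast
qed

lemma cmin_le: "finite S \<Longrightarrow> j \<in> S \<Longrightarrow> cmin c S x \<le> c j x"
  unfolding cmin_def by (rule Min_le) auto

lemma cmin_attained:
  assumes "finite S" "S \<noteq> {}"
  obtains k where "k \<in> S" "cmin c S x = c k x"
proof -
  have "cmin c S x \<in> (\<lambda>j. c j x) ` S"
    unfolding cmin_def using assms by (intro Min_in) auto
  then show ?thesis using that by blast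
qed

locale mrs =
  fixes N :: "'n set" and M :: "'m set"
    and w c :: "'m \<Rightarrow> real \<Rightarrow> real" and p :: "'n \<Rightarrow> real \<Rightarrow> real"
    and qstar :: "'n \<Rightarrow> real" and qbar :: "'n \<Rightarrow> 'm \<Rightarrow> real"
  assumes situation: "mrs_situation N M w c p qstar qbar"
begin

abbreviation v :: "'n set \<Rightarrow> 'm set \<Rightarrow> real" where
  "v \<equiv> mrs_value M w c p qstar qbar"

lemma finite_N: "finite N" and finite_M: "finite M"
  using situation unfolding mrs_situation_def by auto

lemma c_pos: "j \<in> M \<Longrightarrow> 0 \<le> x \<Longrightarrow> 0 < c j x"
  using situation unfolding mrs_situation_def by auto

lemma c_antimono: "j \<in> M \<Longrightarrow> 0 \<le> x \<Longrightarrow> x \<le> y \<Longrightarrow> c j y \<le> c j x"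
  using situation unfolding mrs_situation_def by (cases "x = y") (auto intro: less_imp_le)

lemma c_less_w: "j \<in> M \<Longrightarrow> 0 \<le> x \<Longrightarrow> c j x < w j x"
  using situation unfolding mrs_situation_def by auto

lemma p_antimono: "i \<in> N \<Longrightarrow> 0 \<le> x \<Longrightarrow> x \<le> y \<Longrightarrow> p i y \<le> p i x"
  using situation unfolding mrs_situation_def by auto

lemma qstar_pos: "i \<in> N \<Longrightarrow> 0 < qstar i"
  using situation unfolding mrs_situation_def by auto

lemma qbar_pos: "i \<in> N \<Longrightarrow> j \<in> M \<Longrightarrow> 0 < qbar i j"
  using situation unfolding mrs_situation_def by auto

definition retailer_orders :: "'n \<Rightarrow> ('m \<Rightarrow> real) set" where
  "retailer_orders i = {r. (\<forall>j\<in>M. 0 \<le> r j \<and> r j \<le> qbar i j) \<and> sum r M \<le> qstar i}"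

definition surplus :: "'n \<Rightarrow> real \<Rightarrow> ('m \<Rightarrow> real) \<Rightarrow> real" where
  "surplus i \<pi> r = p i (sum r M) * sum r M - \<pi> * sum r M"

definition best_surplus :: "'n \<Rightarrow> real \<Rightarrow> real" where
  "best_surplus i \<pi> = (SUP r\<in>retailer_orders i. surplus i \<pi> r)"

lemma zero_in_retailer_orders: "i \<in> N \<Longrightarrow> (\<lambda>j. 0) \<in> retailer_orders i"
  unfolding retailer_orders_def using qstar_pos qbar_pos by (auto intro: less_imp_le)

lemma retailer_orders_total_nonneg: "r \<in> retailer_orders i \<Longrightarrow> 0 \<le> sum r M"
  unfolding retailer_orders_def by (auto intro: sum_nonneg)

lemma retailer_orders_total_le: "r \<in> retailer_orders i \<Longrightarrow> sum r M \<le> qstar i"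
  unfolding retailer_orders_def by auto

lemma revenue_le_linear: "i \<in> N \<Longrightarrow> 0 \<le> x \<Longrightarrow> p i x * x \<le> \<bar>p i 0\<bar> * x"
  using p_antimono[of i 0 x] by (meson abs_ge_self mult_right_mono order_trans order_refl)

lemma surplus_le:
  assumes "i \<in> N" "r \<in> retailer_orders i"
  shows "surplus i \<pi> r \<le> (\<bar>p i 0\<bar> + \<bar>\<pi>\<bar>) * qstar i"
proof -
  let ?s = "sum r M"
  have s: "0 \<le> ?s" "?s \<le> qstar i"
    using retailer_orders_total_nonneg[OF assms(2)] retailer_orders_total_le[OF assms(2)] .
  have "- \<pi> * ?s \<le> \<bar>\<pi>\<bar> * ?s"
    using s(1) by (intro mult_right_mono) auto
  then have "surplus i \<pi> r \<le> \<bar>p i 0\<bar> * ?s + \<bar>\<pi>\<bar> * ?s"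
    unfolding surplus_def using revenue_le_linear[OF assms(1) s(1)] by simp
  also have "\<dots> \<le> (\<bar>p i 0\<bar> + \<bar>\<pi>\<bar>) * qstar i"
    using s by (simp add: distrib_right[symmetric] mult_left_mono)
  finally show ?thesis .
qed

lemma bdd_above_surplus: "i \<in> N \<Longrightarrow> bdd_above (surplus i \<pi> ` retailer_orders i)"
  by (rule bdd_aboveI2) (rule surplus_le)

lemma surplus_le_best_surplus:
  "i \<in> N \<Longrightarrow> r \<in> retailer_orders i \<Longrightarrow> surplus i \<pi> r \<le> best_surplus i \<pi>"
  unfolding best_surplus_def by (rule cSUP_upper) (auto intro: bdd_above_surplus)

lemma lipschitz_best_surplus:
  assumes "i \<in> N"
  shows "(qstar i)-lipschitz_on X (best_surplus i)"
proof -
  have "(qstar i)-lipschitz_on X (\<lambda>\<pi>. surplus i \<pi> r)" if r: "r \<in> retailer_orders i" for r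
  proof (rule lipschitz_onI)
    fix \<pi> \<pi>'
    have "dist (surplus i \<pi> r) (surplus i \<pi>' r) = \<bar>\<pi> - \<pi>'\<bar> * sum r M"
      unfolding surplus_def dist_real_def
      using retailer_orders_total_nonneg[OF r]
      by (simp add: left_diff_distrib[symmetric] abs_mult abs_minus_commute)
    also have "\<dots> \<le> qstar i * dist \<pi> \<pi>'"
      using mult_right_mono[OF retailer_orders_total_le[OF r], of "\<bar>\<pi> - \<pi>'\<bar>"]
      by (simp add: dist_real_def mult.commute)
    finally show "dist (surplus i \<pi> r) (surplus i \<pi>' r) \<le> qstar i * dist \<pi> \<pi>'" .
  qed (use qstar_pos[OF assms] in simp)
  then show ?thesis
    unfolding best_surplus_def[abs_def]
    using zero_in_retailer_orders[OF assms] bdd_above_surplus[OF assms]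
    by (intro lipschitz_on_SUP) auto
qed

lemma best_surplus_eq_0:
  assumes "i \<in> N" "\<bar>p i 0\<bar> \<le> \<pi>"
  shows "best_surplus i \<pi> = 0"
proof (rule antisym)
  show "best_surplus i \<pi> \<le> 0"
    unfolding best_surplus_def
  proof (rule cSUP_least)
    fix r assume r: "r \<in> retailer_orders i"
    have "p i (sum r M) * sum r M \<le> \<pi> * sum r M"
      using revenue_le_linear[OF assms(1) retailer_orders_total_nonneg[OF r]]
        mult_right_mono[OF assms(2) retailer_orders_total_nonneg[OF r]] by linarith
    then show "surplus i \<pi> r \<le> 0" unfolding surplus_def by simp
  qed (use zero_in_retailer_orders[OF assms(1)] in auto)
  show "0 \<le> best_surplus i \<pi>"
    using surplus_le_best_surplus[OF assms(1) zero_in_retailer_orders[OF assms(1)]]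
    by (simp add: surplus_def)
qed

lemma sum_best_surplus_approx:
  assumes "I \<subseteq> N" "0 < e"
  obtains r where "\<And>i. i \<in> I \<Longrightarrow> r i \<in> retailer_orders i"
    and "(\<Sum>i\<in>I. best_surplus i \<pi>) \<le> (\<Sum>i\<in>I. surplus i \<pi> (r i)) + e"
proof -
  define d where "d = e / (card I + 1)"
  have "0 < d" using \<open>0 < e\<close> by (simp add: d_def)
  have "\<forall>i\<in>I. \<exists>r. r \<in> retailer_orders i \<and> best_surplus i \<pi> - d < surplus i \<pi> r"
  proof
    fix i assume "i \<in> I"
    then have "i \<in> N" using assms(1) by blast
    have "best_surplus i \<pi> - d < (SUP r\<in>retailer_orders i. surplus i \<pi> r)"
      using \<open>0 < d\<close> by (simp add: best_surplus_def)
    then show "\<exists>r. r \<in> retailer_orders i \<and> best_surplus i \<pi> - d < surplus i \<pi> r"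
      using zero_in_retailer_orders[OF \<open>i \<in> N\<close>] bdd_above_surplus[OF \<open>i \<in> N\<close>]
      by (subst (asm) less_cSUP_iff) auto
  qed
  from bchoice[OF this] obtain r
    where r: "\<forall>i\<in>I. r i \<in> retailer_orders i \<and> best_surplus i \<pi> - d < surplus i \<pi> (r i)"
    by blast
  have "(\<Sum>i\<in>I. best_surplus i \<pi>) \<le> (\<Sum>i\<in>I. surplus i \<pi> (r i) + d)"
    using r by (intro sum_mono) (simp add: less_imp_le algebra_simps)
  also have "\<dots> = (\<Sum>i\<in>I. surplus i \<pi> (r i)) + card I * d"
    by (simp add: sum.distrib)
  also have "\<dots> \<le> (\<Sum>i\<in>I. surplus i \<pi> (r i)) + e"
    using \<open>0 < e\<close> by (simp add: d_def field_simps)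
  finally show ?thesis using that r by blast
qed

lemma cmin_antimono:
  assumes "S \<subseteq> M" "0 \<le> x" "x \<le> y"
  shows "cmin c S y \<le> cmin c S x"
proof (cases "S = {}")
  case True
  then show ?thesis by (simp add: cmin_def)
next
  case False
  have "finite S" using assms(1) finite_M finite_subset by blast
  then obtain k where k: "k \<in> S" "cmin c S x = c k x"
    using cmin_attained[OF _ False] by blast
  have "cmin c S y \<le> c k y" using cmin_le[OF \<open>finite S\<close> k(1)] .
  also have "\<dots> \<le> c k x" using c_antimono k(1) assms by blast
  finally show ?thesis using k(2) by simp
qed

lemma cmin_le_cmin_subset:
  assumes "S \<subseteq> M" "S \<noteq> {}" "0 \<le> x" "x \<le> y"
  shows "cmin c M y \<le> cmin c S x"
proof -
  have "finite S" using assms(1) finite_M finite_subset by blast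
  then obtain k where k: "k \<in> S" "cmin c S x = c k x"
    using cmin_attained[OF _ assms(2)] by blast
  have "cmin c M y \<le> c k y" using cmin_le[OF finite_M] k(1) assms(1) by blast
  also have "\<dots> \<le> c k x" using c_antimono k(1) assms by blast
  finally show ?thesis using k(2) by simp
qed

lemma cmin_le_w:
  assumes "j \<in> M" "0 \<le> x" "x \<le> y"
  shows "cmin c M y \<le> w j x"
proof -
  have "cmin c M y \<le> c j y" using cmin_le[OF finite_M assms(1)] .
  also have "\<dots> \<le> c j x" using c_antimono assms by blast
  also have "\<dots> < w j x" using c_less_w assms by blast
  finally show ?thesis by simp
qed

lemma cmin_pos: "M \<noteq> {} \<Longrightarrow> 0 \<le> x \<Longrightarrow> 0 < cmin c M x"
  using cmin_attained[OF finite_M] c_pos by metis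

definition feasible_orders :: "'n set \<Rightarrow> ('n \<Rightarrow> 'm \<Rightarrow> real) set" where
  "feasible_orders R = {q. mrs_feasible M qstar qbar R q}"

definition total_order :: "'n set \<Rightarrow> ('n \<Rightarrow> 'm \<Rightarrow> real) \<Rightarrow> real" where
  "total_order R q = (\<Sum>j\<in>M. \<Sum>i\<in>R. q i j)"

definition revenue :: "'n set \<Rightarrow> ('n \<Rightarrow> 'm \<Rightarrow> real) \<Rightarrow> real" where
  "revenue R q = (\<Sum>i\<in>R. p i (sum (q i) M) * sum (q i) M)"

definition coalition_profit :: "'n set \<Rightarrow> 'm set \<Rightarrow> ('n \<Rightarrow> 'm \<Rightarrow> real) \<Rightarrow> real" where
  "coalition_profit R S q = (\<Sum>i\<in>R. mrs_profit M w c p R S q i)"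

lemma total_order_eq_sum_rows: "total_order R q = (\<Sum>i\<in>R. sum (q i) M)"
  unfolding total_order_def by (rule sum.swap)

lemma feasible_orders_iff: "q \<in> feasible_orders R \<longleftrightarrow> (\<forall>i\<in>R. q i \<in> retailer_orders i)"
  unfolding feasible_orders_def mrs_feasible_def retailer_orders_def by blast

lemma zero_in_feasible_orders: "R \<subseteq> N \<Longrightarrow> (\<lambda>i j. 0) \<in> feasible_orders R"
  using zero_in_retailer_orders by (auto simp: feasible_orders_iff)

lemma total_order_nonneg: "q \<in> feasible_orders R \<Longrightarrow> 0 \<le> total_order R q"
  unfolding total_order_eq_sum_rows feasible_orders_iff
  by (auto intro: sum_nonneg retailer_orders_total_nonneg)

lemma mrs_profit_all_suppliers:
  "mrs_profit M w c p R M q i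
     = p i (sum (q i) M) * sum (q i) M - cmin c M (total_order R q) * sum (q i) M"
  unfolding mrs_profit_def total_order_def by (simp add: sum_distrib_left)

text \<open>Whichever suppliers S a coalition owns, each unit it orders costs at least the
  cheapest production cost c_M at its total order: its own suppliers produce at c_S of a
  smaller quantity, the others charge a wholesale price above their cost.\<close>
lemma mrs_profit_le_uniform_cost:
  assumes S: "S \<subseteq> M" and q: "q \<in> feasible_orders R" and i: "i \<in> R"
  shows "mrs_profit M w c p R S q i
     \<le> p i (sum (q i) M) * sum (q i) M - cmin c M (total_order R q) * sum (q i) M"
proof -
  let ?Q = "total_order R q" and ?col = "\<lambda>j. \<Sum>i'\<in>R. q i' j"
  have q_nonneg: "0 \<le> q i' j" if "i' \<in> R" "j \<in> M" for i' j
    using q that unfolding feasible_orders_def mrs_feasible_def by blast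
  have col_nonneg: "0 \<le> ?col j" if "j \<in> M" for j
    using q_nonneg that by (auto intro: sum_nonneg)
  have col_le: "?col j \<le> ?Q" if "j \<in> M" for j
    unfolding total_order_def using that col_nonneg by (intro member_le_sum finite_M) auto
  have S_le: "(\<Sum>j\<in>S. ?col j) \<le> ?Q"
    unfolding total_order_def using S col_nonneg by (intro sum_mono2 finite_M) auto
  have own: "cmin c M ?Q * q i j \<le> cmin c S (\<Sum>j'\<in>S. ?col j') * q i j" if "j \<in> S" for j
    using that S i q_nonneg col_nonneg S_le
    by (intro mult_right_mono cmin_le_cmin_subset sum_nonneg) auto
  have bought: "cmin c M ?Q * q i j \<le> w j (?col j) * q i j" if "j \<in> M - S" for j
    using that i q_nonneg col_nonneg col_le by (intro mult_right_mono cmin_le_w) auto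
  have "cmin c M ?Q * sum (q i) M = (\<Sum>j\<in>M - S. cmin c M ?Q * q i j) + (\<Sum>j\<in>S. cmin c M ?Q * q i j)"
    using sum.subset_diff[OF S finite_M, of "\<lambda>j. cmin c M ?Q * q i j"]
    by (simp add: sum_distrib_left)
  also have "\<dots> \<le> (\<Sum>j\<in>M - S. w j (?col j) * q i j)
                 + (\<Sum>j\<in>S. cmin c S (\<Sum>j'\<in>S. ?col j') * q i j)"
    using own bought by (intro add_mono sum_mono) auto
  finally show ?thesis unfolding mrs_profit_def by linarith
qed

lemma coalition_profit_le_uniform_cost:
  "S \<subseteq> M \<Longrightarrow> q \<in> feasible_orders R
   \<Longrightarrow> coalition_profit R S q \<le> revenue R q - cmin c M (total_order R q) * total_order R q"
  unfolding coalition_profit_def revenue_def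
  using mrs_profit_le_uniform_cost[of S q R]
  by (subst (2) total_order_eq_sum_rows)
     (simp add: sum_distrib_left sum_subtractf[symmetric] sum_mono)

lemma coalition_profit_all_suppliers:
  "coalition_profit R M q = revenue R q - cmin c M (total_order R q) * total_order R q"
  unfolding coalition_profit_def revenue_def mrs_profit_all_suppliers
  by (subst (2) total_order_eq_sum_rows) (simp add: sum_distrib_left sum_subtractf)

lemma cost_nonneg:
  assumes "q \<in> feasible_orders R"
  shows "0 \<le> cmin c M (total_order R q) * total_order R q"
proof (cases "M = {}")
  case True
  have "total_order R q = 0" unfolding total_order_def using True by simp
  then show ?thesis by simp
next
  case False
  then show ?thesis
    using cmin_pos[OF False total_order_nonneg[OF assms]] total_order_nonneg[OF assms] by simp
qed

lemma revenue_le_sum_best_surplus: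
  assumes "R \<subseteq> N" "q \<in> feasible_orders R"
  shows "revenue R q - \<pi> * total_order R q \<le> (\<Sum>i\<in>R. best_surplus i \<pi>)"
proof -
  have "revenue R q - \<pi> * total_order R q = (\<Sum>i\<in>R. surplus i \<pi> (q i))"
    unfolding revenue_def surplus_def total_order_eq_sum_rows
    by (simp add: sum_subtractf sum_distrib_left)
  also have "\<dots> \<le> (\<Sum>i\<in>R. best_surplus i \<pi>)"
    using assms surplus_le_best_surplus by (intro sum_mono) (auto simp: feasible_orders_iff)
  finally show ?thesis .
qed

lemma coalition_profit_le_sum_best_surplus_0:
  assumes "R \<subseteq> N" "S \<subseteq> M" "q \<in> feasible_orders R"
  shows "coalition_profit R S q \<le> (\<Sum>i\<in>R. best_surplus i 0)"
  using coalition_profit_le_uniform_cost[OF assms(2,3)] cost_nonneg[OF assms(3)]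
    revenue_le_sum_best_surplus[OF assms(1,3), of 0]
  by linarith

lemma coalition_profit_le_value:
  assumes "R \<subseteq> N" "S \<subseteq> M" "q \<in> feasible_orders R"
  shows "coalition_profit R S q \<le> v R S"
proof (cases "R = {}")
  case True
  then show ?thesis by (simp add: coalition_profit_def mrs_value_def)
next
  case False
  have "bdd_above (coalition_profit R S ` feasible_orders R)"
    using coalition_profit_le_sum_best_surplus_0[OF assms(1,2)] by (rule bdd_aboveI2)
  then show ?thesis
    using False assms(3) unfolding mrs_value_def coalition_profit_def[abs_def] feasible_orders_def
    by (auto intro: cSUP_upper)
qed

lemma value_le:
  assumes "R \<subseteq> N" and bound: "\<And>q. q \<in> feasible_orders R \<Longrightarrow> coalition_profit R S q \<le> b"
  shows "v R S \<le> b"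
proof (cases "R = {}")
  case True
  then show ?thesis
    using bound[OF zero_in_feasible_orders[OF assms(1)]] by (simp add: coalition_profit_def mrs_value_def)
next
  case False
  then show ?thesis
    using bound zero_in_feasible_orders[OF assms(1)]
    unfolding mrs_value_def coalition_profit_def[symmetric] feasible_orders_def[symmetric]
    by (auto intro!: cSUP_least)
qed

lemma value_nonneg: "R \<subseteq> N \<Longrightarrow> S \<subseteq> M \<Longrightarrow> 0 \<le> v R S"
  using coalition_profit_le_value[OF _ _ zero_in_feasible_orders]
  by (fastforce simp: coalition_profit_def mrs_profit_def)

lemma grand_value_ge_merged_orders:
  assumes R: "R \<subseteq> N" and q: "q \<in> feasible_orders R"
    and r: "\<And>i. i \<in> N - R \<Longrightarrow> r i \<in> retailer_orders i"
    and cost: "cmin c M (total_order R q) \<le> \<pi>"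
  shows "revenue R q - cmin c M (total_order R q) * total_order R q
           + (\<Sum>i\<in>N - R. surplus i \<pi> (r i)) \<le> v N M"
proof -
  define q' where "q' i = (if i \<in> R then q i else r i)" for i
  define Q Q' where "Q = total_order R q" and "Q' = total_order N q'"
  let ?c' = "cmin c M Q'"
  have q': "q' \<in> feasible_orders N"
    using q r unfolding feasible_orders_iff q'_def by auto
  have Q'_eq: "Q' = Q + (\<Sum>i\<in>N - R. sum (r i) M)"
    unfolding Q_def Q'_def total_order_eq_sum_rows sum.subset_diff[OF R finite_N]
    by (simp add: q'_def)
  have r_nonneg: "0 \<le> sum (r i) M" if "i \<in> N - R" for i
    using retailer_orders_total_nonneg[OF r[OF that]] .
  have "0 \<le> (\<Sum>i\<in>N - R. sum (r i) M)"
    using r_nonneg by (rule sum_nonneg)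
  then have "Q \<le> Q'" unfolding Q'_eq by simp
  then have "?c' \<le> cmin c M Q"
    using cmin_antimono total_order_nonneg[OF q] by (simp add: Q_def)
  then have own: "?c' * Q \<le> cmin c M Q * Q" and others: "?c' \<le> \<pi>"
    using total_order_nonneg[OF q] cost by (auto simp: Q_def mult_right_mono)
  have "revenue N q' = revenue R q + (\<Sum>i\<in>N - R. p i (sum (r i) M) * sum (r i) M)"
    unfolding revenue_def sum.subset_diff[OF R finite_N] by (simp add: q'_def)
  then have "revenue N q' - ?c' * Q'
      = (revenue R q - ?c' * Q)
        + (\<Sum>i\<in>N - R. p i (sum (r i) M) * sum (r i) M - ?c' * sum (r i) M)"
    unfolding Q'_eq by (simp add: sum_subtractf sum_distrib_right algebra_simps)
  moreover have "(\<Sum>i\<in>N - R. surplus i \<pi> (r i))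
      \<le> (\<Sum>i\<in>N - R. p i (sum (r i) M) * sum (r i) M - ?c' * sum (r i) M)"
    unfolding surplus_def using others r_nonneg by (intro sum_mono) (simp add: mult_right_mono)
  moreover have "revenue N q' - ?c' * Q' \<le> v N M"
    using coalition_profit_le_value[OF order_refl order_refl q']
    by (simp add: coalition_profit_all_suppliers Q'_def)
  ultimately show ?thesis using own by (simp add: Q_def)
qed

lemma grand_value_ge_extension:
  assumes "R \<subseteq> N" "q \<in> feasible_orders R" "cmin c M (total_order R q) \<le> \<pi>"
  shows "revenue R q - cmin c M (total_order R q) * total_order R q
           + (\<Sum>i\<in>N - R. best_surplus i \<pi>) \<le> v N M"
proof (rule field_le_epsilon)
  fix e :: real assume "0 < e"
  then obtain r where "\<And>i. i \<in> N - R \<Longrightarrow> r i \<in> retailer_orders i"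
    and "(\<Sum>i\<in>N - R. best_surplus i \<pi>) \<le> (\<Sum>i\<in>N - R. surplus i \<pi> (r i)) + e"
    using sum_best_surplus_approx[of "N - R"] by blast
  then show "revenue R q - cmin c M (total_order R q) * total_order R q
      + (\<Sum>i\<in>N - R. best_surplus i \<pi>) \<le> v N M + e"
    using grand_value_ge_merged_orders[OF assms(1,2) _ assms(3)] by fastforce
qed

text \<open>If the plan is cheap at price \<pi> the grand coalition can extend it profitably;
  if not, it is dominated by the retailers' individual best replies at price \<pi>.\<close>
lemma coalition_profit_le_sum_best_surplus:
  assumes R: "R \<subseteq> N" and S: "S \<subseteq> M" and q: "q \<in> feasible_orders R"
    and grand: "v N M \<le> (\<Sum>i\<in>N. best_surplus i \<pi>)"
  shows "coalition_profit R S q \<le> (\<Sum>i\<in>R. best_surplus i \<pi>)"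
proof -
  let ?Q = "total_order R q"
  have profit: "coalition_profit R S q \<le> revenue R q - cmin c M ?Q * ?Q"
    using coalition_profit_le_uniform_cost[OF S q] .
  show ?thesis
  proof (cases "cmin c M ?Q \<le> \<pi>")
    case True
    have "(\<Sum>i\<in>N. best_surplus i \<pi>)
        = (\<Sum>i\<in>N - R. best_surplus i \<pi>) + (\<Sum>i\<in>R. best_surplus i \<pi>)"
      using sum.subset_diff[OF R finite_N] .
    then show ?thesis
      using profit grand grand_value_ge_extension[OF R q True] by linarith
  next
    case False
    then have "\<pi> * ?Q \<le> cmin c M ?Q * ?Q"
      using total_order_nonneg[OF q] by (simp add: mult_right_mono)
    then show ?thesis
      using profit revenue_le_sum_best_surplus[OF R q, of \<pi>] by linarith
  qed
qed

lemma exists_price_sum_best_surplus_eq_value: "\<exists>\<pi>. (\<Sum>i\<in>N. best_surplus i \<pi>) = v N M"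
proof -
  define P where "P = (\<Sum>i\<in>N. \<bar>p i 0\<bar>)"
  have "0 \<le> P" unfolding P_def by (simp add: sum_nonneg)
  have "best_surplus i P = 0" if "i \<in> N" for i
    using that finite_N unfolding P_def by (intro best_surplus_eq_0 member_le_sum) auto
  then have "(\<Sum>i\<in>N. best_surplus i P) \<le> v N M"
    using value_nonneg by simp
  moreover have "v N M \<le> (\<Sum>i\<in>N. best_surplus i 0)"
    using coalition_profit_le_sum_best_surplus_0 by (intro value_le) auto
  moreover have "continuous_on {0..P} (\<lambda>\<pi>. \<Sum>i\<in>N. best_surplus i \<pi>)"
    using lipschitz_on_continuous_on[OF lipschitz_best_surplus] by (intro continuous_on_sum) auto
  ultimately show ?thesis
    using IVT2'[of "\<lambda>\<pi>. \<Sum>i\<in>N. best_surplus i \<pi>" P "v N M" 0] \<open>0 \<le> P\<close> by auto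
qed

lemma price_allocation_in_core:
  assumes "(\<Sum>i\<in>N. best_surplus i \<pi>) = v N M"
  shows "case_sum (\<lambda>i. best_surplus i \<pi>) (\<lambda>j. 0) \<in> mrs_core N M v"
proof -
  have payoff: "(\<Sum>k\<in>Inl ` R \<union> Inr ` S. case_sum (\<lambda>i. best_surplus i \<pi>) (\<lambda>j. 0) k)
      = (\<Sum>i\<in>R. best_surplus i \<pi>)" if "R \<subseteq> N" "S \<subseteq> M" for R S
    using that finite_N finite_M
    unfolding Plus_def[symmetric] by (simp add: sum.Plus comp_def finite_subset)
  have "v R S \<le> (\<Sum>i\<in>R. best_surplus i \<pi>)" if "R \<subseteq> N" "S \<subseteq> M" for R S
    using that assms coalition_profit_le_sum_best_surplus by (intro value_le) auto
  then show ?thesis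
    unfolding mrs_core_def using payoff assms by simp
qed

end

theorem theorem1:
  fixes N :: "'n set" and M :: "'m set"
    and w c :: "'m \<Rightarrow> real \<Rightarrow> real" and p :: "'n \<Rightarrow> real \<Rightarrow> real"
    and qstar :: "'n \<Rightarrow> real" and qbar :: "'n \<Rightarrow> 'm \<Rightarrow> real"
  assumes "mrs_situation N M w c p qstar qbar"
  shows "mrs_core N M (mrs_value M w c p qstar qbar) \<noteq> {}"
proof -
  interpret mrs N M w c p qstar qbar
    using assms by (rule mrs.intro)
  obtain \<pi> where "(\<Sum>i\<in>N. best_surplus i \<pi>) = v N M"
    using exists_price_sum_best_surplus_eq_value by blast
  then show ?thesis
    using price_allocation_in_core by blast
qed

end
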